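(* Let $G$ be a simple undirected graph on vertex set $[n]$ and let $I_H\subseteq[n]$ be a vertex set whose induced subgraph $H=G[I_H]$ is triangle-free. Then for every $X\in\operatorname{R}_1[\mathcal{M}_n^+(G)]$, the comparison matrix of the principal submatrix satisfies $M(X[I_H])\ge 0$.
   Context: $\mathcal{M}_n^+(G)$ is the cone of $n\times n$ complex PSD matrices $X$ with $X_{ij}=0$ whenever $i\neq j$ and $\{i,j\}$ is not an edge of $G$. For a cone $\mathcal{C}\subseteq\mathcal{M}_n^+$, $\operatorname{R}_1[\mathcal{C}]$ is the convex cone generated by the rank-1 matrices in $\mathcal{C}$. $X[I]$ denotes the principal submatrix with rows and columns in $I$. The comparison matrix $M(Y)$ of a square matrix $Y$ is defined by $M(Y)_{ii}=|Y_{ii}|$ and $M(Y)_{ij}=-|Y_{ij}|$ for $i\ne j$. A graph is triangle-free if it contains no 3-cycle. *)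

theory Defs
  imports Complex_Main "HOL-Library.Complex_Order"
begin

text \<open>n x n complex matrices are represented as functions nat => nat => complex,
  only the entries with indices < n being relevant. Vertex set [n] = {0..<n}.\<close>

definition hermitian :: "nat \<Rightarrow> (nat \<Rightarrow> nat \<Rightarrow> complex) \<Rightarrow> bool" where
  "hermitian n X \<longleftrightarrow> (\<forall>i<n. \<forall>j<n. X i j = cnj (X j i))"

definition psd :: "nat \<Rightarrow> (nat \<Rightarrow> nat \<Rightarrow> complex) \<Rightarrow> bool" where
  "psd n X \<longleftrightarrow> hermitian n X \<and>
     (\<forall>v :: nat \<Rightarrow> complex. 0 \<le> (\<Sum>i<n. \<Sum>j<n. cnj (v i) * X i j * v j))"

definition simple_graph :: "nat \<Rightarrow> (nat \<Rightarrow> nat \<Rightarrow> bool) \<Rightarrow> bool" where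
  "simple_graph n E \<longleftrightarrow> (\<forall>i<n. \<not> E i i) \<and> (\<forall>i<n. \<forall>j<n. E i j \<longleftrightarrow> E j i)"

definition M_plus :: "nat \<Rightarrow> (nat \<Rightarrow> nat \<Rightarrow> bool) \<Rightarrow> (nat \<Rightarrow> nat \<Rightarrow> complex) set" where
  "M_plus n E = {X. psd n X \<and> (\<forall>i<n. \<forall>j<n. i \<noteq> j \<and> \<not> E i j \<longrightarrow> X i j = 0)}"

definition rank_one :: "nat \<Rightarrow> (nat \<Rightarrow> nat \<Rightarrow> complex) \<Rightarrow> bool" where
  "rank_one n X \<longleftrightarrow> (\<exists>i<n. \<exists>j<n. X i j \<noteq> 0) \<and>
     (\<exists>u w :: nat \<Rightarrow> complex. \<forall>i<n. \<forall>j<n. X i j = u i * w j)"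

text \<open>R_1[C]: the convex cone generated by the rank-one matrices in C
  (finite nonnegative combinations; the empty combination gives 0).\<close>
definition R1 :: "nat \<Rightarrow> (nat \<Rightarrow> nat \<Rightarrow> complex) set \<Rightarrow> (nat \<Rightarrow> nat \<Rightarrow> complex) set" where
  "R1 n C = {X. \<exists>(m::nat) (c::nat \<Rightarrow> real) Y.
      (\<forall>k<m. c k \<ge> 0 \<and> Y k \<in> C \<and> rank_one n (Y k)) \<and>
      (\<forall>i<n. \<forall>j<n. X i j = (\<Sum>k<m. complex_of_real (c k) * Y k i j))}"

definition principal_submatrix :: "(nat \<Rightarrow> nat \<Rightarrow> complex) \<Rightarrow> nat set \<Rightarrow> (nat \<Rightarrow> nat \<Rightarrow> complex)" where
  "principal_submatrix X I = (\<lambda>a b. X (sorted_list_of_set I ! a) (sorted_list_of_set I ! b))"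

definition comparison_matrix :: "(nat \<Rightarrow> nat \<Rightarrow> complex) \<Rightarrow> (nat \<Rightarrow> nat \<Rightarrow> complex)" where
  "comparison_matrix Y = (\<lambda>i j. if i = j then complex_of_real (cmod (Y i i))
                                 else - complex_of_real (cmod (Y i j)))"

definition triangle_free_on :: "(nat \<Rightarrow> nat \<Rightarrow> bool) \<Rightarrow> nat set \<Rightarrow> bool" where
  "triangle_free_on E I \<longleftrightarrow>
     \<not> (\<exists>a\<in>I. \<exists>b\<in>I. \<exists>c\<in>I. a \<noteq> b \<and> b \<noteq> c \<and> a \<noteq> c \<and> E a b \<and> E b c \<and> E a c)"

end

theory Submission
  imports Defs "HOL-Analysis.Convex"
begin

(* Write X = sum_k c_k Y_k with rank-one Y_k in M_n^+(G) and put r_k(a) = sqrt (Y_k)_aa.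
   For rank-one PSD Y_k one has |(Y_k)_ab| = r_k(a) r_k(b), so the vertices where r_k does
   not vanish span a clique of G; inside the triangle-free set I this clique has at most
   two vertices.  Hence M(Y_k[I]) = 2 diag(r_k^2) - r_k r_k^T has a nonnegative quadratic
   form, by Cauchy-Schwarz on a support of size two.  For a vector v with x = |v|,
   v* M(X[I]) v >= x^T M(X[I]) x >= sum_k c_k x^T M(Y_k[I]) x >= 0, because the diagonal of
   X is the weighted sum of the diagonals of the Y_k while the moduli of its off-diagonal
   entries are at most the weighted sums of theirs. *)

lemma psd_diag_nonneg:
  assumes "psd n Y" "i < n"
  shows "0 \<le> Y i i"
proof -
  let ?e = "\<lambda>j. if j = i then (1::complex) else 0"
  have "0 \<le> (\<Sum>a<n. \<Sum>b<n. cnj (?e a) * Y a b * ?e b)"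
    using assms(1) unfolding psd_def by (rule conjunct2[THEN spec])
  also have "\<dots> = (\<Sum>a<n. if a = i then Y i i else 0)"
    by (intro sum.cong refl) (simp add: if_distrib[of "\<lambda>x. _ * x"] cong: if_cong)
  also have "\<dots> = Y i i"
    using assms(2) by simp
  finally show ?thesis .
qed

lemma cmod_eq_Re_if_nonneg: "0 \<le> z \<Longrightarrow> cmod z = Re z"
  by (simp add: less_eq_complex_def cmod_eq_Re)

lemma psd_cong:
  assumes "psd n A" "\<And>i j. i < n \<Longrightarrow> j < n \<Longrightarrow> B i j = A i j"
  shows "psd n B"
  unfolding psd_def hermitian_def
proof (intro conjI allI impI)
  fix i j assume "i < n" "j < n"
  then show "B i j = cnj (B j i)"
    using assms unfolding psd_def hermitian_def by metis
next
  fix v :: "nat \<Rightarrow> complex"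
  have "(\<Sum>i<n. \<Sum>j<n. cnj (v i) * B i j * v j) = (\<Sum>i<n. \<Sum>j<n. cnj (v i) * A i j * v j)"
    using assms(2) by (intro sum.cong) auto
  also have "0 \<le> \<dots>"
    using assms(1) unfolding psd_def by (rule conjunct2[THEN spec])
  finally show "0 \<le> (\<Sum>i<n. \<Sum>j<n. cnj (v i) * B i j * v j)" .
qed

lemma rank_one_psd_norm_entry:
  assumes "psd n Y" "rank_one n Y" "a < n" "b < n"
  shows "cmod (Y a b) = sqrt (Re (Y a a)) * sqrt (Re (Y b b))"
proof -
  obtain u w where uw: "\<forall>i<n. \<forall>j<n. Y i j = u i * w j"
    using assms(2) unfolding rank_one_def by blast
  have "Y b a = cnj (Y a b)"
    using assms(1,3,4) unfolding psd_def hermitian_def by blast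
  then have "(cmod (Y a b))\<^sup>2 = cmod (Y a b * Y b a)"
    by (simp add: norm_mult power2_eq_square)
  also have "Y a b * Y b a = Y a a * Y b b"
    using uw assms(3,4) by (simp add: algebra_simps)
  also have "cmod (Y a a * Y b b) = Re (Y a a) * Re (Y b b)"
    using assms psd_diag_nonneg by (simp add: norm_mult cmod_eq_Re_if_nonneg)
  finally show ?thesis
    by (metis norm_ge_zero real_sqrt_mult real_sqrt_unique)
qed

lemma psd_R1:
  assumes "\<And>Y. Y \<in> C \<Longrightarrow> psd n Y" and "X \<in> R1 n C"
  shows "psd n X"
proof -
  obtain m :: nat and c Y where cY: "\<forall>k<m. c k \<ge> 0 \<and> Y k \<in> C \<and> rank_one n (Y k)"
    and X: "\<forall>i<n. \<forall>j<n. X i j = (\<Sum>k<m. complex_of_real (c k) * Y k i j)"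
    using assms(2) unfolding R1_def mem_Collect_eq by blast
  have psdY: "psd n (Y k)" if "k < m" for k
    using assms(1) cY that by blast
  have "X i j = cnj (X j i)" if "i < n" "j < n" for i j
  proof -
    have herm: "Y k i j = cnj (Y k j i)" if "k < m" for k
      using psdY[OF that] \<open>i < n\<close> \<open>j < n\<close> unfolding psd_def hermitian_def by blast
    have "X i j = (\<Sum>k<m. complex_of_real (c k) * Y k i j)"
      using X that by blast
    also have "\<dots> = (\<Sum>k<m. complex_of_real (c k) * cnj (Y k j i))"
      using herm by (intro sum.cong) auto
    also have "\<dots> = cnj (X j i)"
      using X that by simp
    finally show ?thesis .
  qed
  moreover have "0 \<le> (\<Sum>i<n. \<Sum>j<n. cnj (v i) * X i j * v j)" for v
  proof -
    have "(\<Sum>i<n. \<Sum>j<n. cnj (v i) * X i j * v j)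
        = (\<Sum>i<n. \<Sum>j<n. \<Sum>k<m. complex_of_real (c k) * (cnj (v i) * Y k i j * v j))"
      using X by (intro sum.cong refl) (simp add: sum_distrib_left sum_distrib_right mult_ac)
    also have "\<dots> = (\<Sum>k<m. complex_of_real (c k) * (\<Sum>i<n. \<Sum>j<n. cnj (v i) * Y k i j * v j))"
      by (simp add: sum_distrib_left sum.swap[of _ "{..<m}"])
    also have "0 \<le> \<dots>"
    proof (rule sum_nonneg)
      fix k assume "k \<in> {..<m}"
      then have "0 \<le> complex_of_real (c k)" and "0 \<le> (\<Sum>i<n. \<Sum>j<n. cnj (v i) * Y k i j * v j)"
        using cY psdY unfolding psd_def by (auto simp: less_eq_complex_def)
      then show "0 \<le> complex_of_real (c k) * (\<Sum>i<n. \<Sum>j<n. cnj (v i) * Y k i j * v j)"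
        by (rule mult_nonneg_nonneg)
    qed
    finally show ?thesis .
  qed
  ultimately show ?thesis
    unfolding psd_def hermitian_def by blast
qed

lemma R1_psd_entry_moduli:
  assumes "\<And>Y. Y \<in> C \<Longrightarrow> psd n Y" and "X \<in> R1 n C"
  obtains m :: nat and c Y where "\<forall>k<m. c k \<ge> 0 \<and> Y k \<in> C \<and> rank_one n (Y k)"
    and "\<And>a. a < n \<Longrightarrow> cmod (X a a) = (\<Sum>k<m. c k * Re (Y k a a))"
    and "\<And>a b. a < n \<Longrightarrow> b < n \<Longrightarrow>
           cmod (X a b) \<le> (\<Sum>k<m. c k * (sqrt (Re (Y k a a)) * sqrt (Re (Y k b b))))"
proof -
  obtain m :: nat and c Y where cY: "\<forall>k<m. c k \<ge> 0 \<and> Y k \<in> C \<and> rank_one n (Y k)"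
    and X: "\<forall>i<n. \<forall>j<n. X i j = (\<Sum>k<m. complex_of_real (c k) * Y k i j)"
    using assms(2) unfolding R1_def mem_Collect_eq by blast
  have psdY: "psd n (Y k)" if "k < m" for k
    using assms(1) cY that by blast
  have "cmod (X a a) = (\<Sum>k<m. c k * Re (Y k a a))" if a: "a < n" for a
  proof -
    have "X a a = (\<Sum>k<m. complex_of_real (c k) * Y k a a)"
      using X a by blast
    also have "\<dots> = (\<Sum>k<m. complex_of_real (c k * Re (Y k a a)))"
    proof (rule sum.cong[OF refl])
      fix k assume "k \<in> {..<m}"
      then have "0 \<le> Y k a a"
        using psd_diag_nonneg[OF psdY a] by simp
      then show "complex_of_real (c k) * Y k a a = complex_of_real (c k * Re (Y k a a))"
        by (simp add: less_eq_complex_def complex_eq_iff)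
    qed
    also have "\<dots> = complex_of_real (\<Sum>k<m. c k * Re (Y k a a))"
      by (simp only: of_real_sum)
    finally have "X a a = complex_of_real (\<Sum>k<m. c k * Re (Y k a a))" .
    moreover have "0 \<le> (\<Sum>k<m. c k * Re (Y k a a))"
      using cY psd_diag_nonneg[OF psdY a] by (intro sum_nonneg) (simp add: less_eq_complex_def)
    ultimately show ?thesis
      by (metis norm_of_real abs_of_nonneg)
  qed
  moreover have "cmod (X a b) \<le> (\<Sum>k<m. c k * (sqrt (Re (Y k a a)) * sqrt (Re (Y k b b))))"
    if "a < n" "b < n" for a b
  proof -
    have "cmod (X a b) \<le> (\<Sum>k<m. cmod (complex_of_real (c k) * Y k a b))"
      using X that by (simp add: norm_sum)
    also have "\<dots> = (\<Sum>k<m. c k * (sqrt (Re (Y k a a)) * sqrt (Re (Y k b b))))"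
      using cY that by (intro sum.cong refl) (simp add: norm_mult rank_one_psd_norm_entry[OF psdY])
    finally show ?thesis .
  qed
  ultimately show ?thesis
    using cY that by blast
qed

lemma hermitian_on_quadratic_form_real:
  assumes "\<And>a b. a \<in> I \<Longrightarrow> b \<in> I \<Longrightarrow> A a b = cnj (A b a)"
  shows "Im (\<Sum>a\<in>I. \<Sum>b\<in>I. cnj (v a) * A a b * v b) = 0"
proof -
  let ?Q = "\<Sum>a\<in>I. \<Sum>b\<in>I. cnj (v a) * A a b * v b"
  have "cnj ?Q = (\<Sum>a\<in>I. \<Sum>b\<in>I. v a * cnj (A a b) * cnj (v b))"
    by simp
  also have "\<dots> = (\<Sum>a\<in>I. \<Sum>b\<in>I. cnj (v b) * A b a * v a)"
  proof (intro sum.cong refl)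
    fix a b assume "a \<in> I" "b \<in> I"
    then have "cnj (A a b) = A b a"
      using assms[of b a] by simp
    then show "v a * cnj (A a b) * cnj (v b) = cnj (v b) * A b a * v a"
      by (simp add: mult_ac)
  qed
  also have "\<dots> = ?Q"
    by (rule sum.swap)
  finally have "cnj ?Q = ?Q" .
  then show ?thesis
    by (simp only: complex_is_Real_iff flip: Reals_cnj_iff)
qed

lemma comparison_form_le_Re:
  "(\<Sum>a\<in>I. \<Sum>b\<in>I. if a = b then cmod (A a a) * (cmod (v a))\<^sup>2
                      else - (cmod (A a b) * cmod (v a) * cmod (v b)))
     \<le> Re (\<Sum>a\<in>I. \<Sum>b\<in>I. cnj (v a) * comparison_matrix A a b * v b)"
proof -
  have "(if a = b then cmod (A a a) * (cmod (v a))\<^sup>2 else - (cmod (A a b) * cmod (v a) * cmod (v b)))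
      \<le> Re (cnj (v a) * comparison_matrix A a b * v b)" for a b
  proof (cases "a = b")
    case True
    have "cnj (v a) * v a = complex_of_real ((cmod (v a))\<^sup>2)"
      by (metis complex_norm_square mult.commute)
    then have "cnj (v a) * comparison_matrix A a a * v a = complex_of_real (cmod (A a a) * (cmod (v a))\<^sup>2)"
      by (simp add: comparison_matrix_def mult_ac)
    then show ?thesis
      using True by simp
  next
    case False
    have "Re (cnj (v a) * v b) \<le> cmod (v a) * cmod (v b)"
      by (metis complex_Re_le_cmod complex_mod_cnj norm_mult)
    then have "cmod (A a b) * Re (cnj (v a) * v b) \<le> cmod (A a b) * (cmod (v a) * cmod (v b))"
      by (rule mult_left_mono) simp
    moreover have "cnj (v a) * comparison_matrix A a b * v b = - (complex_of_real (cmod (A a b)) * (cnj (v a) * v b))"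
      using False by (simp add: comparison_matrix_def)
    ultimately show ?thesis
      using False by (simp add: algebra_simps)
  qed
  then show ?thesis
    by (simp add: sum_mono)
qed

lemma triangle_free_clique_card_le_2:
  assumes "triangle_free_on E I" "S \<subseteq> I" "\<And>a b. a \<in> S \<Longrightarrow> b \<in> S \<Longrightarrow> a \<noteq> b \<Longrightarrow> E a b"
  shows "card S \<le> 2"
proof (rule ccontr)
  assume "\<not> card S \<le> 2"
  then obtain T where "T \<subseteq> S" "card T = 3"
    using obtain_subset_with_card_n[of 3 S] by auto
  then obtain a b c where abc: "a \<in> S" "b \<in> S" "c \<in> S" "a \<noteq> b" "b \<noteq> c" "a \<noteq> c"
    by (auto simp: card_3_iff)
  then have "E a b" "E b c" "E a c"
    using assms(3) by auto
  moreover have "a \<in> I" "b \<in> I" "c \<in> I"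
    using abc assms(2) by auto
  ultimately show False
    using abc assms(1) unfolding triangle_free_on_def by blast
qed

lemma sum_if_diag_square_else_neg_product:
  fixes t :: "'a \<Rightarrow> real"
  assumes "finite J"
  shows "(\<Sum>a\<in>J. \<Sum>b\<in>J. if a = b then (t a)\<^sup>2 else - (t a * t b))
       = 2 * (\<Sum>a\<in>J. (t a)\<^sup>2) - (\<Sum>a\<in>J. t a)\<^sup>2"
proof -
  have "(\<Sum>a\<in>J. \<Sum>b\<in>J. if a = b then (t a)\<^sup>2 else - (t a * t b))
      = (\<Sum>a\<in>J. \<Sum>b\<in>J. (if a = b then 2 * (t a)\<^sup>2 else 0) - t a * t b)"
    by (intro sum.cong refl) (auto simp: power2_eq_square)
  also have "\<dots> = (\<Sum>a\<in>J. 2 * (t a)\<^sup>2) - (\<Sum>a\<in>J. \<Sum>b\<in>J. t a * t b)"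
    using assms by (simp add: sum_subtractf)
  also have "(\<Sum>a\<in>J. \<Sum>b\<in>J. t a * t b) = (\<Sum>a\<in>J. t a)\<^sup>2"
    by (simp add: power2_eq_square sum_product)
  finally show ?thesis
    by (simp add: sum_distrib_left)
qed

lemma square_sum_le_twice_sum_squares:
  fixes t :: "'a \<Rightarrow> real"
  assumes "finite J" "card {a\<in>J. t a \<noteq> 0} \<le> 2"
  shows "(\<Sum>a\<in>J. t a)\<^sup>2 \<le> 2 * (\<Sum>a\<in>J. (t a)\<^sup>2)"
proof -
  define S where "S = {a\<in>J. t a \<noteq> 0}"
  have "S \<subseteq> J"
    by (auto simp: S_def)
  then have sums: "(\<Sum>a\<in>J. t a) = (\<Sum>a\<in>S. t a)" "(\<Sum>a\<in>J. (t a)\<^sup>2) = (\<Sum>a\<in>S. (t a)\<^sup>2)"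
    by (auto simp: S_def intro: sum.mono_neutral_right[OF assms(1)])
  have "(\<Sum>a\<in>J. t a)\<^sup>2 \<le> (\<Sum>a\<in>S. (t a)\<^sup>2) * card S"
    unfolding sums by (rule sum_squared_le_sum_of_squares)
  also have "\<dots> \<le> (\<Sum>a\<in>S. (t a)\<^sup>2) * 2"
    using assms(2) by (intro mult_left_mono) (auto simp: S_def sum_nonneg)
  finally show ?thesis
    by (simp add: sums mult.commute)
qed

lemma M_plus_rank_one_edge:
  assumes "Y \<in> M_plus n E" "rank_one n Y" "a < n" "b < n" "a \<noteq> b" "Y a a \<noteq> 0" "Y b b \<noteq> 0"
  shows "E a b"
proof -
  have psd: "psd n Y"
    using assms(1) by (simp add: M_plus_def)
  have "0 < Re (Y i i)" if "i < n" "Y i i \<noteq> 0" for i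
    using psd_diag_nonneg[OF psd \<open>i < n\<close>] that(2) by (auto simp: less_eq_complex_def complex_eq_iff)
  then have "0 < Re (Y a a)" "0 < Re (Y b b)"
    using assms(3,4,6,7) by auto
  then have "cmod (Y a b) \<noteq> 0"
    by (simp add: rank_one_psd_norm_entry[OF psd assms(2-4)])
  then show ?thesis
    using assms(1,3-5) unfolding M_plus_def by auto
qed

lemma M_plus_rank_one_form_nonneg:
  fixes s :: "nat \<Rightarrow> real"
  assumes "Y \<in> M_plus n E" "rank_one n Y" "I \<subseteq> {0..<n}" "triangle_free_on E I"
    and "\<And>a. a \<in> I \<Longrightarrow> s a \<noteq> 0 \<Longrightarrow> Y a a \<noteq> 0"
  shows "0 \<le> (\<Sum>a\<in>I. \<Sum>b\<in>I. if a = b then (s a)\<^sup>2 else - (s a * s b))"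
proof -
  have fin: "finite I"
    using assms(3) finite_subset by blast
  have "card {a\<in>I. s a \<noteq> 0} \<le> 2"
  proof (rule triangle_free_clique_card_le_2[OF assms(4)])
    fix a b assume "a \<in> {a\<in>I. s a \<noteq> 0}" "b \<in> {a\<in>I. s a \<noteq> 0}" "a \<noteq> b"
    then show "E a b"
      using assms(3) by (intro M_plus_rank_one_edge[OF assms(1,2)] assms(5)) auto
  qed auto
  then show ?thesis
    using square_sum_le_twice_sum_squares[OF fin] by (simp add: sum_if_diag_square_else_neg_product[OF fin])
qed

lemma weighted_sum_of_forms_le_form:
  fixes c :: "'k \<Rightarrow> real" and r :: "'k \<Rightarrow> 'a \<Rightarrow> real"
  assumes "\<And>a. a \<in> I \<Longrightarrow> d a = (\<Sum>k\<in>K. c k * (r k a)\<^sup>2)"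
    and "\<And>a b. a \<in> I \<Longrightarrow> b \<in> I \<Longrightarrow> e a b \<le> (\<Sum>k\<in>K. c k * (r k a * r k b))"
    and "\<And>a. 0 \<le> x a"
  shows "(\<Sum>k\<in>K. c k * (\<Sum>a\<in>I. \<Sum>b\<in>I. if a = b then (r k a * x a)\<^sup>2
                                            else - (r k a * x a * (r k b * x b))))
     \<le> (\<Sum>a\<in>I. \<Sum>b\<in>I. if a = b then d a * (x a)\<^sup>2 else - (e a b * x a * x b))"
proof -
  have "(\<Sum>k\<in>K. c k * (\<Sum>a\<in>I. \<Sum>b\<in>I. if a = b then (r k a * x a)\<^sup>2
                                            else - (r k a * x a * (r k b * x b))))
      = (\<Sum>a\<in>I. \<Sum>b\<in>I. \<Sum>k\<in>K. c k * (if a = b then (r k a * x a)\<^sup>2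
                                            else - (r k a * x a * (r k b * x b))))"
    unfolding sum_distrib_left by (subst sum.swap) (rule sum.cong[OF refl], rule sum.swap)
  also have "\<dots> \<le> (\<Sum>a\<in>I. \<Sum>b\<in>I. if a = b then d a * (x a)\<^sup>2 else - (e a b * x a * x b))"
  proof (intro sum_mono)
    fix a b assume ab: "a \<in> I" "b \<in> I"
    show "(\<Sum>k\<in>K. c k * (if a = b then (r k a * x a)\<^sup>2 else - (r k a * x a * (r k b * x b))))
        \<le> (if a = b then d a * (x a)\<^sup>2 else - (e a b * x a * x b))"
    proof (cases "a = b")
      case True
      then show ?thesis
        using assms(1)[OF ab(1)] by (simp add: power_mult_distrib sum_distrib_left mult_ac)
    next
      case False
      have "e a b * (x a * x b) \<le> (\<Sum>k\<in>K. c k * (r k a * r k b)) * (x a * x b)"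
        using assms(2)[OF ab] assms(3) by (intro mult_right_mono) simp_all
      then show ?thesis
        using False by (simp add: sum_distrib_left sum_distrib_right sum_negf mult_ac)
    qed
  qed
  finally show ?thesis .
qed

lemma R1_M_plus_comparison_form_nonneg:
  assumes "I \<subseteq> {0..<n}" "triangle_free_on E I" "X \<in> R1 n (M_plus n E)"
  shows "0 \<le> Re (\<Sum>a\<in>I. \<Sum>b\<in>I. cnj (v a) * comparison_matrix X a b * v b)"
proof -
  obtain m :: nat and c Y where cY: "\<forall>k<m. c k \<ge> 0 \<and> Y k \<in> M_plus n E \<and> rank_one n (Y k)"
    and diag: "\<And>a. a < n \<Longrightarrow> cmod (X a a) = (\<Sum>k<m. c k * Re (Y k a a))"
    and off: "\<And>a b. a < n \<Longrightarrow> b < n \<Longrightarrow>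
           cmod (X a b) \<le> (\<Sum>k<m. c k * (sqrt (Re (Y k a a)) * sqrt (Re (Y k b b))))"
    using R1_psd_entry_moduli[OF _ assms(3)] by (auto simp: M_plus_def)
  have below_n: "a < n" if "a \<in> I" for a
    using assms(1) that by auto
  define x where "x a = cmod (v a)" for a
  define r where "r k a = sqrt (Re (Y k a a))" for k a
  \<comment> \<open>\<open>form k\<close> is the quadratic form of \<open>M(Y\<^sub>k[I])\<close> at \<open>x\<close>, as \<open>|Y\<^sub>k a b| = r k a * r k b\<close>.\<close>
  define form where "form k = (\<Sum>a\<in>I. \<Sum>b\<in>I. if a = b then (r k a * x a)\<^sup>2
                                              else - (r k a * x a * (r k b * x b)))" for k
  have "(\<Sum>k<m. c k * form k)
      \<le> (\<Sum>a\<in>I. \<Sum>b\<in>I. if a = b then cmod (X a a) * (x a)\<^sup>2 else - (cmod (X a b) * x a * x b))"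
    unfolding form_def
  proof (rule weighted_sum_of_forms_le_form)
    fix a assume "a \<in> I"
    have "c k * Re (Y k a a) = c k * (r k a)\<^sup>2" if "k \<in> {..<m}" for k
      using cY that psd_diag_nonneg[of n "Y k" a] below_n[OF \<open>a \<in> I\<close>]
      by (simp add: r_def M_plus_def less_eq_complex_def)
    then have "(\<Sum>k<m. c k * Re (Y k a a)) = (\<Sum>k<m. c k * (r k a)\<^sup>2)"
      by (rule sum.cong[OF refl])
    then show "cmod (X a a) = (\<Sum>k<m. c k * (r k a)\<^sup>2)"
      using diag[OF below_n[OF \<open>a \<in> I\<close>]] by simp
  qed (use off below_n in \<open>simp_all add: x_def r_def\<close>)
  also have "\<dots> \<le> Re (\<Sum>a\<in>I. \<Sum>b\<in>I. cnj (v a) * comparison_matrix X a b * v b)"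
    unfolding x_def by (rule comparison_form_le_Re)
  finally have "(\<Sum>k<m. c k * form k) \<le> Re (\<Sum>a\<in>I. \<Sum>b\<in>I. cnj (v a) * comparison_matrix X a b * v b)" .
  moreover have "0 \<le> form k" if "k < m" for k
    unfolding form_def
    using cY that assms(1,2) by (intro M_plus_rank_one_form_nonneg[of "Y k" n E]) (auto simp: r_def)
  then have "0 \<le> (\<Sum>k<m. c k * form k)"
    using cY by (intro sum_nonneg mult_nonneg_nonneg) auto
  ultimately show ?thesis
    by linarith
qed

lemma psd_principal_submatrix:
  assumes "finite I"
    and "\<And>i j. i \<in> I \<Longrightarrow> j \<in> I \<Longrightarrow> A i j = cnj (A j i)"
    and "\<And>w. 0 \<le> (\<Sum>i\<in>I. \<Sum>j\<in>I. cnj (w i) * A i j * w j)"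
  shows "psd (card I) (principal_submatrix A I)"
proof -
  let ?\<sigma> = "(!) (sorted_list_of_set I)"
  have bij: "bij_betw ?\<sigma> {..<card I} I"
    using assms(1) by (intro bij_betw_nth) auto
  have "?\<sigma> a \<in> I" if "a < card I" for a
    using bij_betwE[OF bij] that by blast
  then have "hermitian (card I) (principal_submatrix A I)"
    using assms(2) unfolding hermitian_def principal_submatrix_def by blast
  moreover have "0 \<le> (\<Sum>a<card I. \<Sum>b<card I. cnj (v a) * principal_submatrix A I a b * v b)" for v
  proof -
    define w where "w = v \<circ> inv_into {..<card I} ?\<sigma>"
    have v: "v a = w (?\<sigma> a)" if "a < card I" for a
      using bij that by (simp add: w_def bij_betw_imp_inj_on)
    have "(\<Sum>a<card I. \<Sum>b<card I. cnj (v a) * principal_submatrix A I a b * v b)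
        = (\<Sum>a<card I. \<Sum>b<card I. cnj (w (?\<sigma> a)) * A (?\<sigma> a) (?\<sigma> b) * w (?\<sigma> b))"
      by (intro sum.cong refl) (simp add: v principal_submatrix_def)
    also have "\<dots> = (\<Sum>a<card I. \<Sum>j\<in>I. cnj (w (?\<sigma> a)) * A (?\<sigma> a) j * w j)"
      by (rule sum.cong[OF refl], rule sum.reindex_bij_betw[OF bij])
    also have "\<dots> = (\<Sum>i\<in>I. \<Sum>j\<in>I. cnj (w i) * A i j * w j)"
      by (rule sum.reindex_bij_betw[OF bij])
    finally show ?thesis
      using assms(3) by simp
  qed
  ultimately show ?thesis
    unfolding psd_def by blast
qed

lemma comparison_matrix_hermitian:
  assumes "hermitian n A"
  shows "hermitian n (comparison_matrix A)"
  unfolding hermitian_def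
proof (intro allI impI)
  fix i j assume "i < n" "j < n"
  then have "cmod (A i j) = cmod (A j i)"
    using assms unfolding hermitian_def by (metis complex_mod_cnj)
  then show "comparison_matrix A i j = cnj (comparison_matrix A j i)"
    by (simp add: comparison_matrix_def)
qed

lemma comparison_matrix_principal_submatrix:
  assumes "finite I" "a < card I" "b < card I"
  shows "comparison_matrix (principal_submatrix A I) a b = principal_submatrix (comparison_matrix A) I a b"
  using assms by (simp add: comparison_matrix_def principal_submatrix_def nth_eq_iff_index_eq)

theorem mainTheorem6:
  fixes n :: nat and E :: "nat \<Rightarrow> nat \<Rightarrow> bool" and I :: "nat set"
    and X :: "nat \<Rightarrow> nat \<Rightarrow> complex"
  assumes "simple_graph n E"
    and "I \<subseteq> {0..<n}"
    and "triangle_free_on E I"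
    and "X \<in> R1 n (M_plus n E)"
  shows "psd (card I) (comparison_matrix (principal_submatrix X I))"
proof -
  have fin: "finite I"
    using assms(2) finite_subset by blast
  have "psd n X"
    using psd_R1[OF _ assms(4)] by (simp add: M_plus_def)
  then have "hermitian n (comparison_matrix X)"
    unfolding psd_def by (simp add: comparison_matrix_hermitian)
  moreover have "i < n" if "i \<in> I" for i
    using assms(2) that by auto
  ultimately have herm: "\<And>i j. i \<in> I \<Longrightarrow> j \<in> I \<Longrightarrow> comparison_matrix X i j = cnj (comparison_matrix X j i)"
    unfolding hermitian_def by blast
  have "0 \<le> (\<Sum>i\<in>I. \<Sum>j\<in>I. cnj (w i) * comparison_matrix X i j * w j)" for w
    using hermitian_on_quadratic_form_real[of I "comparison_matrix X", OF herm] R1_M_plus_comparison_form_nonneg[OF assms(2-4)]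
    by (simp add: less_eq_complex_def)
  then have "psd (card I) (principal_submatrix (comparison_matrix X) I)"
    using psd_principal_submatrix[of I "comparison_matrix X", OF fin herm] by blast
  then show ?thesis
    by (rule psd_cong) (simp add: comparison_matrix_principal_submatrix[OF fin])
qed

end
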